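(* Let $S$ be a finite nonempty set of positive integers and $s=\max S$. The minimum density of a dominating set in the distance graph $G(S)$ is achieved by a periodic dominating set with period at most $(2s)2^{2s}$.
   Context: The distance graph $G(S)$ has vertex set $\mathbb{Z}$, with $i,j$ adjacent iff $|i-j|\in S$. A set $D\subseteq\mathbb{Z}$ is dominating if every integer is in $D$ or adjacent to an element of $D$. The density of $A\subseteq\mathbb{Z}$ is $\delta(A)=\limsup_{N\to\infty}\frac{|A\cap[-N,N]|}{2N+1}$. A set $A$ is periodic with period $p$ if $A+p=A$. *)

theory Defs
  imports Complex_Main "HOL-Library.Liminf_Limsup" "HOL-Library.Extended_Real"
begin

definition dist_adj :: "nat set \<Rightarrow> int \<Rightarrow> int \<Rightarrow> bool" where
  "dist_adj S i j \<longleftrightarrow> \<bar>i - j\<bar> \<in> int ` S"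

definition dominating :: "nat set \<Rightarrow> int set \<Rightarrow> bool" where
  "dominating S D \<longleftrightarrow> (\<forall>x::int. x \<in> D \<or> (\<exists>d\<in>D. dist_adj S x d))"

definition density :: "int set \<Rightarrow> ereal" where
  "density A = limsup (\<lambda>N::nat. ereal (real (card (A \<inter> {- int N .. int N})) / (2 * real N + 1)))"

definition periodic_with :: "int set \<Rightarrow> int \<Rightarrow> bool" where
  "periodic_with A p \<longleftrightarrow> (\<lambda>x. x + p) ` A = A"

end

theory Submission
  imports Defs
begin

text \<open>
  Let \<open>s = Max S\<close> and \<open>M = 2^(2s)\<close>. Among the finitely many periodic dominating sets with
  period at most \<open>M\<close> choose one of minimal density \<open>c\<close>. Every dominating set \<open>D\<close> has density
  at least \<open>c\<close>: in any window of length more than \<open>M\<close> two positions \<open>i < j\<close> carry the same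
  length-\<open>2s\<close> pattern of \<open>D\<close>. Repeating \<open>D \<inter> [i,j)\<close> periodically is again dominating, so
  \<open>D\<close> has at least \<open>c (j - i)\<close> elements in \<open>[i,j)\<close>; excising \<open>[i,j)\<close> and gluing the two
  sides together is dominating as well, and induction on the window length gives
  \<open>|D \<inter> [a, a+n)| \<ge> c n - M\<close>.
\<close>

definition periodic_set :: "int \<Rightarrow> int set \<Rightarrow> int set" where
  "periodic_set p B = {x. x mod p \<in> B}"

lemma periodic_with_periodic_set: "periodic_with (periodic_set p B) p"
  unfolding periodic_with_def
proof
  show "(\<lambda>x. x + p) ` periodic_set p B \<subseteq> periodic_set p B"
    by (auto simp: periodic_set_def)
  show "periodic_set p B \<subseteq> (\<lambda>x. x + p) ` periodic_set p B"
  proof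
    fix x assume "x \<in> periodic_set p B"
    then have "x - p \<in> periodic_set p B"
      by (simp add: periodic_set_def mod_diff_left_eq[symmetric])
    then show "x \<in> (\<lambda>x. x + p) ` periodic_set p B" by (intro image_eqI[of _ _ "x - p"]) auto
  qed
qed

lemma periodic_set_add_mult: "z + p * k \<in> periodic_set p B \<longleftrightarrow> z \<in> periodic_set p B"
  by (simp add: periodic_set_def)

lemma card_periodic_set_Int_block:
  assumes p: "0 < p" and B: "B \<subseteq> {0..<p}"
  shows "card (periodic_set p B \<inter> {a..<a+p}) = card B"
proof -
  have inj: "inj_on (\<lambda>x. x mod p) (periodic_set p B \<inter> {a..<a+p})"
  proof (rule inj_onI)
    fix x y assume x: "x \<in> periodic_set p B \<inter> {a..<a+p}" and y: "y \<in> periodic_set p B \<inter> {a..<a+p}"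
      and "x mod p = y mod p"
    then have "p dvd x - y" by (simp add: mod_eq_dvd_iff)
    moreover have "\<bar>x - y\<bar> < p" using x y by auto
    ultimately show "x = y" using dvd_imp_le_int[of "x - y" p] p by (cases "x = y") auto
  qed
  have "(\<lambda>x. x mod p) ` (periodic_set p B \<inter> {a..<a+p}) = B"
  proof
    show "(\<lambda>x. x mod p) ` (periodic_set p B \<inter> {a..<a+p}) \<subseteq> B" by (auto simp: periodic_set_def)
    show "B \<subseteq> (\<lambda>x. x mod p) ` (periodic_set p B \<inter> {a..<a+p})"
    proof
      fix b assume b: "b \<in> B"
      then have "(a + (b - a) mod p) mod p = b" using B by (auto simp: mod_add_right_eq)
      moreover have "a + (b - a) mod p \<in> {a..<a+p}" using p by auto
      ultimately show "b \<in> (\<lambda>x. x mod p) ` (periodic_set p B \<inter> {a..<a+p})"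
        using b unfolding periodic_set_def by (intro image_eqI[of _ _ "a + (b - a) mod p"]) auto
    qed
  qed
  then show ?thesis using card_image[OF inj] by simp
qed

lemma card_periodic_set_Int_blocks:
  assumes p: "0 < p" and B: "B \<subseteq> {0..<p}"
  shows "card (periodic_set p B \<inter> {a..<a + int q * p}) = q * card B"
proof (induction q)
  case 0
  then show ?case by simp
next
  case (Suc q)
  let ?P = "periodic_set p B" and ?b = "a + int q * p"
  have nonneg: "0 \<le> p * int q" using p by simp
  have split: "?P \<inter> {a..<a + int (Suc q) * p} = (?P \<inter> {a..<?b}) \<union> (?P \<inter> {?b..<?b + p})"
    by (auto simp: algebra_simps) (use nonneg p in linarith)+
  have "card (?P \<inter> {a..<a + int (Suc q) * p}) = card (?P \<inter> {a..<?b}) + card (?P \<inter> {?b..<?b + p})"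
    unfolding split by (rule card_Un_disjoint) auto
  then show ?case using Suc card_periodic_set_Int_block[OF p B, of ?b] by simp
qed

lemma LIMSEQ_ereal_add_divide_odd: "(\<lambda>N::nat. ereal (a + b / (2 * real N + 1))) \<longlonglongrightarrow> ereal a"
proof -
  have "filterlim (\<lambda>N::nat. 2 * real N + 1) at_top sequentially"
    by (rule filterlim_at_top_mono[OF filterlim_real_sequentially]) auto
  then have "(\<lambda>N::nat. b / (2 * real N + 1)) \<longlonglongrightarrow> 0"
    by (intro real_tendsto_divide_at_top[OF tendsto_const])
  then have "(\<lambda>N::nat. a + b / (2 * real N + 1)) \<longlonglongrightarrow> a"
    using tendsto_add[OF tendsto_const[of a]] by fastforce
  then show ?thesis by (simp add: lim_ereal)
qed

lemma density_nonneg: "0 \<le> density A"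
  unfolding density_def by (rule le_Limsup) auto

lemma density_le_one: "density A \<le> 1"
proof -
  have "card (A \<inter> {- int N .. int N}) \<le> 2 * N + 1" for N
    using card_mono[of "{- int N .. int N}" "A \<inter> {- int N .. int N}"] by simp
  then have "real (card (A \<inter> {- int N .. int N})) \<le> real (2 * N + 1)" for N
    by (simp only: of_nat_le_iff)
  then have "real (card (A \<inter> {- int N .. int N})) / (2 * real N + 1) \<le> 1" for N
    by (simp add: field_simps)
  then have "density A \<le> limsup (\<lambda>N::nat. 1)"
    unfolding density_def by (intro Limsup_mono) auto
  then show ?thesis by (simp add: Limsup_const)
qed

lemma density_periodic_set_le:
  assumes p: "0 < p" and B: "B \<subseteq> {0..<p}"
  shows "density (periodic_set p B) \<le> ereal (card B / p)"
proof -
  let ?c = "real (card B)"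
  have bound: "real (card (periodic_set p B \<inter> {- int N .. int N})) / (2 * real N + 1)
      \<le> ?c / p + ?c / (2 * real N + 1)" for N
  proof -
    \<comment> \<open>\<open>[-N, N]\<close> is covered by \<open>q \<le> (2N + 1)/p + 1\<close> consecutive blocks of length \<open>p\<close>\<close>
    define n where "n = 2 * int N + 1"
    define q where "q = nat (n div p) + 1"
    have "0 \<le> n div p" using p n_def by (simp add: pos_imp_zdiv_nonneg_iff)
    then have iq: "int q * p = n div p * p + p" unfolding q_def by (simp add: algebra_simps)
    have r: "n = n div p * p + n mod p" "0 \<le> n mod p" "n mod p < p" using p by simp_all
    have "n < int q * p" using iq r by linarith
    then have sub: "periodic_set p B \<inter> {- int N .. int N} \<subseteq> periodic_set p B \<inter> {- int N..<- int N + int q * p}"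
      using n_def by auto
    have "card (periodic_set p B \<inter> {- int N .. int N}) \<le> q * card B"
      using card_mono[OF _ sub] card_periodic_set_Int_blocks[OF p B, of "- int N" q] by simp
    then have "real (card (periodic_set p B \<inter> {- int N .. int N})) \<le> real q * ?c"
      by (metis of_nat_le_iff of_nat_mult)
    also have "\<dots> \<le> ((2 * real N + 1) / p + 1) * ?c"
    proof (rule mult_right_mono)
      have "real_of_int (int q * p) \<le> real_of_int (n + p)" using iq r by (simp only: of_int_le_iff)
      then show "real q \<le> (2 * real N + 1) / p + 1" using p unfolding n_def by (simp add: field_simps)
    qed simp
    finally have "real (card (periodic_set p B \<inter> {- int N .. int N})) / (2 * real N + 1)
        \<le> ((2 * real N + 1) / p + 1) * ?c / (2 * real N + 1)"
      by (simp add: divide_right_mono)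
    also have "\<dots> = ?c / p + ?c / (2 * real N + 1)" by (simp add: field_simps)
    finally show ?thesis .
  qed
  have "density (periodic_set p B) \<le> limsup (\<lambda>N::nat. ereal (?c / p + ?c / (2 * real N + 1)))"
    unfolding density_def by (rule Limsup_mono) (use bound in auto)
  also have "\<dots> = ereal (?c / p)"
    by (rule lim_imp_Limsup) (simp, rule LIMSEQ_ereal_add_divide_odd)
  finally show ?thesis .
qed

lemma density_ge_of_window_count:
  assumes "\<And>n a. r * real n - K \<le> real (card (D \<inter> {a..<a + int n}))"
  shows "ereal r \<le> density D"
proof -
  have bound: "r + (- K) / (2 * real N + 1) \<le> real (card (D \<inter> {- int N .. int N})) / (2 * real N + 1)" for N
  proof -
    have "{- int N..<- int N + int (2 * N + 1)} = {- int N .. int N}" by auto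
    then have "r * real (2 * N + 1) - K \<le> real (card (D \<inter> {- int N .. int N}))"
      using assms[of "2 * N + 1" "- int N"] by simp
    then have "(r * real (2 * N + 1) - K) / (2 * real N + 1) \<le> real (card (D \<inter> {- int N .. int N})) / (2 * real N + 1)"
      by (simp add: divide_right_mono)
    moreover have "(r * real (2 * N + 1) - K) / (2 * real N + 1) = r + (- K) / (2 * real N + 1)"
      by (simp add: field_simps)
    ultimately show ?thesis by simp
  qed
  have "ereal r = limsup (\<lambda>N::nat. ereal (r + (- K) / (2 * real N + 1)))"
    by (rule lim_imp_Limsup[symmetric]) (simp, rule LIMSEQ_ereal_add_divide_odd)
  also have "\<dots> \<le> density D"
    unfolding density_def by (rule Limsup_mono) (use bound in auto)
  finally show ?thesis .
qed

definition pattern :: "int set \<Rightarrow> nat \<Rightarrow> int \<Rightarrow> bool list" where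
  "pattern D k x = map (\<lambda>t. x + int t \<in> D) [0..<k]"

lemma pattern_eq_iff: "pattern D k i = pattern D k j \<longleftrightarrow> (\<forall>t<k. i + int t \<in> D \<longleftrightarrow> j + int t \<in> D)"
  by (auto simp: pattern_def map_eq_conv)

lemma pattern_repeats:
  obtains i j where "a \<le> i" "i < j" "j \<le> a + 2 ^ k" "pattern D k i = pattern D k j"
proof -
  have "\<not> inj_on (pattern D k) {a..a + 2 ^ k}"
  proof
    assume inj: "inj_on (pattern D k) {a..a + 2 ^ k}"
    have "card {a..a + 2 ^ k} \<le> card {xs :: bool list. set xs \<subseteq> UNIV \<and> length xs = k}"
      using finite_lists_length_eq[of "UNIV :: bool set" k]
      by (intro card_inj_on_le[OF inj]) (auto simp: pattern_def)
    also have "\<dots> = 2 ^ k" using card_lists_length_eq[of "UNIV :: bool set" k] by (simp add: card_UNIV_bool)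
    finally show False by simp
  qed
  then obtain x y where xy: "x \<in> {a..a + 2 ^ k}" "y \<in> {a..a + 2 ^ k}" "x \<noteq> y"
      "pattern D k x = pattern D k y"
    unfolding inj_on_def by blast
  show thesis
  proof (cases "x < y")
    case True
    then show ?thesis using that[of x y] xy by auto
  next
    case False
    then show ?thesis using that[of y x] xy by auto
  qed
qed

text \<open>The set repeating \<open>D \<inter> [i,j)\<close> with period \<open>j - i\<close>.\<close>

definition periodization :: "int set \<Rightarrow> int \<Rightarrow> int \<Rightarrow> int set" where
  "periodization D i j = periodic_set (j - i) {b \<in> {0..<j - i}. i + (b - i) mod (j - i) \<in> D}"

lemma mem_periodization: "i < j \<Longrightarrow> x \<in> periodization D i j \<longleftrightarrow> i + (x - i) mod (j - i) \<in> D"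
  unfolding periodization_def periodic_set_def by (simp add: mod_diff_left_eq)

lemma periodization_agrees:
  assumes ij: "i < j" and rep: "pattern D k i = pattern D k j"
  shows "i \<le> x \<Longrightarrow> x < j + int k \<Longrightarrow> x \<in> periodization D i j \<longleftrightarrow> x \<in> D"
proof (induction "nat (x - i)" arbitrary: x rule: less_induct)
  case less
  show ?case
  proof (cases "x < j")
    case True
    then have "(x - i) mod (j - i) = x - i" using less.prems by simp
    then show ?thesis using ij by (simp add: mem_periodization)
  next
    case False
    define t where "t = nat (x - j)"
    have t: "t < k" "x = j + int t" using False less.prems unfolding t_def by auto
    have "x \<in> periodization D i j \<longleftrightarrow> i + int t \<in> periodization D i j"
    proof -
      have "x - i = (j - i) + int t" using t by simp
      then have "(x - i) mod (j - i) = int t mod (j - i)" by (simp only: mod_add_self1)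
      then show ?thesis using ij by (simp add: mem_periodization)
    qed
    also have "\<dots> \<longleftrightarrow> i + int t \<in> D" using t ij by (intro less.hyps) auto
    also have "\<dots> \<longleftrightarrow> x \<in> D" using rep t by (simp add: pattern_eq_iff)
    finally show ?thesis .
  qed
qed

lemma density_periodization_le:
  assumes "i < j"
  shows "density (periodization D i j) \<le> ereal (card (D \<inter> {i..<j}) / real_of_int (j - i))"
proof -
  let ?B = "{b \<in> {0..<j - i}. i + (b - i) mod (j - i) \<in> D}"
  have B: "?B \<subseteq> {0..<j - i}" by blast
  have "periodization D i j \<inter> {i..<j} = D \<inter> {i..<j}"
    using assms by (auto simp: mem_periodization)
  moreover have "card (periodic_set (j - i) ?B \<inter> {i..<i + (j - i)}) = card ?B"
    using assms by (intro card_periodic_set_Int_block[OF _ B]) simp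
  ultimately have "card ?B = card (D \<inter> {i..<j})" by (simp add: periodization_def)
  then show ?thesis
    using density_periodic_set_le[OF _ B] assms by (simp add: periodization_def)
qed

lemma dist_adj_le_Max: "finite S \<Longrightarrow> dist_adj S x d \<Longrightarrow> \<bar>x - d\<bar> \<le> int (Max S)"
  unfolding dist_adj_def by auto

lemma dominated_via_translate:
  assumes S: "finite S" and D: "dominating S D"
    and near: "\<And>x. \<bar>x - (y + \<delta>)\<bar> \<le> int (Max S) \<Longrightarrow> x \<in> D \<Longrightarrow> x - \<delta> \<in> D'"
  shows "y \<in> D' \<or> (\<exists>d\<in>D'. dist_adj S y d)"
proof -
  from D have "y + \<delta> \<in> D \<or> (\<exists>d\<in>D. dist_adj S (y + \<delta>) d)" unfolding dominating_def by blast
  then show ?thesis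
  proof
    assume "y + \<delta> \<in> D"
    then show ?thesis using near[of "y + \<delta>"] by simp
  next
    assume "\<exists>d\<in>D. dist_adj S (y + \<delta>) d"
    then obtain d where d: "d \<in> D" "dist_adj S (y + \<delta>) d" by blast
    then have "d - \<delta> \<in> D'" using near dist_adj_le_Max[OF S d(2)] by (simp add: abs_minus_commute)
    moreover have "dist_adj S y (d - \<delta>)" using d(2) by (simp add: dist_adj_def algebra_simps)
    ultimately show ?thesis by blast
  qed
qed

lemma dominating_periodization:
  assumes S: "finite S" and D: "dominating S D" and ij: "i < j"
    and rep: "pattern D (2 * Max S) i = pattern D (2 * Max S) j"
  shows "dominating S (periodization D i j)"
  unfolding dominating_def
proof
  fix y
  let ?s = "int (Max S)" and ?p = "j - i"
  define y' where "y' = i + ?s + (y - i - ?s) mod ?p"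
  have y': "i + ?s \<le> y'" "y' < j + ?s"
    using ij pos_mod_sign[of ?p "y - i - ?s"] pos_mod_bound[of ?p "y - i - ?s"] unfolding y'_def by linarith+
  have "y - y' = ?p * ((y - i - ?s) div ?p)"
    using div_mult_mod_eq[of "y - i - ?s" ?p] unfolding y'_def by (simp add: algebra_simps)
  then obtain k where k: "y - y' = ?p * k" ..
  show "y \<in> periodization D i j \<or> (\<exists>d\<in>periodization D i j. dist_adj S y d)"
  proof (rule dominated_via_translate[OF S D])
    fix x assume near: "\<bar>x - (y + (y' - y))\<bar> \<le> ?s" and "x \<in> D"
    have "i \<le> x" "x < j + int (2 * Max S)" using near y' by (simp_all add: abs_le_iff)
    then have "x \<in> periodization D i j" using periodization_agrees[OF ij rep] \<open>x \<in> D\<close> by blast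
    moreover have "x - (y' - y) = x + ?p * k" using k by simp
    ultimately show "x - (y' - y) \<in> periodization D i j"
      unfolding periodization_def by (simp only: periodic_set_add_mult)
  qed
qed

definition cut_out :: "int set \<Rightarrow> int \<Rightarrow> int \<Rightarrow> int set" where
  "cut_out D i j = {x \<in> D. x < i} \<union> (\<lambda>x. x - (j - i)) ` {x \<in> D. j \<le> x}"

lemma mem_cut_out: "z \<in> cut_out D i j \<longleftrightarrow> (z < i \<and> z \<in> D) \<or> (i \<le> z \<and> z + (j - i) \<in> D)"
  unfolding cut_out_def by (auto intro: image_eqI[of _ _ "z + (j - i)"])

lemma dominating_cut_out:
  assumes S: "finite S" and D: "dominating S D"
    and rep: "pattern D (2 * Max S) i = pattern D (2 * Max S) j"
  shows "dominating S (cut_out D i j)"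
  unfolding dominating_def
proof
  fix y
  let ?s = "int (Max S)"
  have low: "x \<in> cut_out D i j" if "x < i + 2 * ?s" "x \<in> D" for x
  proof (cases "x < i")
    case False
    define t where "t = nat (x - i)"
    have t: "t < 2 * Max S" "x = i + int t" using False that(1) unfolding t_def by auto
    then have "j + int t \<in> D" using rep \<open>x \<in> D\<close> by (simp add: pattern_eq_iff)
    then have "x + (j - i) \<in> D" using t(2) by (simp add: algebra_simps)
    then show ?thesis using False by (simp add: mem_cut_out)
  qed (use that in \<open>simp add: mem_cut_out\<close>)
  show "y \<in> cut_out D i j \<or> (\<exists>d\<in>cut_out D i j. dist_adj S y d)"
  proof (cases "y < i + ?s")
    case True
    show ?thesis
    proof (rule dominated_via_translate[OF S D, of _ 0])
      fix x assume "\<bar>x - (y + 0)\<bar> \<le> ?s" "x \<in> D"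
      then show "x - 0 \<in> cut_out D i j" using True low[of x] by (simp add: abs_le_iff)
    qed
  next
    case False
    show ?thesis
    proof (rule dominated_via_translate[OF S D, of _ "j - i"])
      fix x assume "\<bar>x - (y + (j - i))\<bar> \<le> ?s" "x \<in> D"
      then show "x - (j - i) \<in> cut_out D i j" using False by (simp add: mem_cut_out abs_le_iff)
    qed
  qed
qed

lemma card_cut_out:
  assumes "a \<le> i" "i < j" "j \<le> a + int n"
  shows "card (D \<inter> {a..<a + int n}) = card (cut_out D i j \<inter> {a..<a + int n - (j - i)}) + card (D \<inter> {i..<j})"
proof -
  let ?shift = "\<lambda>x. x - (j - i)"
  have "D \<inter> {a..<a + int n} = ((D \<inter> {a..<i}) \<union> (D \<inter> {i..<j})) \<union> (D \<inter> {j..<a + int n})"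
    using assms by auto
  also have "card \<dots> = card ((D \<inter> {a..<i}) \<union> (D \<inter> {i..<j})) + card (D \<inter> {j..<a + int n})"
    using assms by (intro card_Un_disjoint) auto
  also have "\<dots> = card (D \<inter> {a..<i}) + card (D \<inter> {i..<j}) + card (D \<inter> {j..<a + int n})"
    by (subst card_Un_disjoint) auto
  finally have whole: "card (D \<inter> {a..<a + int n}) = \<dots>" .
  have "cut_out D i j \<inter> {a..<a + int n - (j - i)} = (D \<inter> {a..<i}) \<union> ?shift ` (D \<inter> {j..<a + int n})"
    using assms unfolding cut_out_def by auto
  also have "card \<dots> = card (D \<inter> {a..<i}) + card (?shift ` (D \<inter> {j..<a + int n}))"
    using assms by (intro card_Un_disjoint) auto
  also have "card (?shift ` (D \<inter> {j..<a + int n})) = card (D \<inter> {j..<a + int n})"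
    by (rule card_image) (auto simp: inj_on_def)
  finally show ?thesis using whole by simp
qed

lemma card_window_ge:
  assumes S: "finite S" and r: "r \<le> 1"
    and segment: "\<And>D i j. dominating S D \<Longrightarrow> i < j \<Longrightarrow> j - i \<le> 2 ^ (2 * Max S) \<Longrightarrow>
      pattern D (2 * Max S) i = pattern D (2 * Max S) j \<Longrightarrow> r * real_of_int (j - i) \<le> real (card (D \<inter> {i..<j}))"
    and D: "dominating S D"
  shows "r * real n - 2 ^ (2 * Max S) \<le> real (card (D \<inter> {a..<a + int n}))"
  using D
proof (induction n arbitrary: D a rule: less_induct)
  case (less n)
  let ?M = "2 ^ (2 * Max S) :: nat"
  show ?case
  proof (cases "n \<le> ?M")
    case True
    have "r * real n \<le> real n" using mult_right_mono[OF r, of "real n"] by simp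
    also have "\<dots> \<le> real ?M" using True by (simp only: of_nat_le_iff)
    finally show ?thesis by simp
  next
    case False
    obtain i j where ij: "a \<le> i" "i < j" "j \<le> a + 2 ^ (2 * Max S)"
      and rep: "pattern D (2 * Max S) i = pattern D (2 * Max S) j"
      by (rule pattern_repeats)
    have "(2::int) ^ (2 * Max S) < int n" using False by (simp add: not_le flip: of_nat_less_iff)
    then have j: "j \<le> a + int n" "j - i < int n" using ij by linarith+
    define n' where "n' = n - nat (j - i)"
    have n': "n' < n" "int n' = int n - (j - i)" using ij j unfolding n'_def by auto
    have shifted_end: "a + int n - (j - i) = a + int n'" using n'(2) by simp
    have "r * real n' - ?M \<le> real (card (cut_out D i j \<inter> {a..<a + int n'}))"
      using less.IH[OF n'(1) dominating_cut_out[OF S less.prems rep]] by simp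
    moreover have "r * real_of_int (j - i) \<le> real (card (D \<inter> {i..<j}))"
      using segment[OF less.prems ij(2) _ rep] ij by simp
    moreover have "card (D \<inter> {a..<a + int n}) = card (cut_out D i j \<inter> {a..<a + int n'}) + card (D \<inter> {i..<j})"
      using card_cut_out[OF ij(1,2) j(1), of D] by (simp only: shifted_end)
    moreover have "real n = real n' + real_of_int (j - i)"
      using arg_cong[OF n'(2), of real_of_int] by simp
    ultimately show ?thesis by (simp add: distrib_left)
  qed
qed

lemma periodic_dominating_min_density:
  assumes "1 \<le> m"
  obtains p0 B0 where "1 \<le> p0" "p0 \<le> m" "B0 \<subseteq> {0..<p0}" "dominating S (periodic_set p0 B0)"
    and "\<And>p B. 1 \<le> p \<Longrightarrow> p \<le> m \<Longrightarrow> B \<subseteq> {0..<p} \<Longrightarrow> dominating S (periodic_set p B) \<Longrightarrow>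
      density (periodic_set p0 B0) \<le> density (periodic_set p B)"
proof -
  define Par where "Par = {(p, B). p \<in> {1..m} \<and> B \<subseteq> {0..<p} \<and> dominating S (periodic_set p B)}"
  have "finite Par"
    by (rule finite_subset[of _ "Sigma {1..m} (\<lambda>p. Pow {0..<p})"]) (auto simp: Par_def)
  moreover have "(1, {0}) \<in> Par"
    using assms by (auto simp: Par_def dominating_def periodic_set_def)
  ultimately obtain p0 B0 where "(p0, B0) \<in> Par"
    and "\<And>p B. (p, B) \<in> Par \<Longrightarrow> density (periodic_set p0 B0) \<le> density (periodic_set p B)"
    using ex_min_if_finite[of "(\<lambda>(p, B). density (periodic_set p B)) ` Par"] by (fastforce simp: not_less)
  then show thesis unfolding Par_def by (intro that[of p0 B0]) auto
qed

theorem theorem4: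
  fixes S :: "nat set"
  assumes "finite S" and "S \<noteq> {}" and "0 \<notin> S"
  shows "\<exists>D p. dominating S D \<and> 0 < p \<and> p \<le> int (2 * Max S * 2 ^ (2 * Max S))
           \<and> periodic_with D p
           \<and> (\<forall>D'. dominating S D' \<longrightarrow> density D \<le> density D')"
proof -
  let ?M = "2 ^ (2 * Max S) :: int"
  have "1 \<le> ?M" by simp
  then obtain p0 B0 where p0: "1 \<le> p0" "p0 \<le> ?M" and B0: "B0 \<subseteq> {0..<p0}"
    and dom: "dominating S (periodic_set p0 B0)"
    and minimal: "\<And>p B. 1 \<le> p \<Longrightarrow> p \<le> ?M \<Longrightarrow> B \<subseteq> {0..<p} \<Longrightarrow> dominating S (periodic_set p B) \<Longrightarrow>
      density (periodic_set p0 B0) \<le> density (periodic_set p B)"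
    by (rule periodic_dominating_min_density[where S = S]) (rule that)
  obtain r where r: "density (periodic_set p0 B0) = ereal r" "r \<le> 1"
    using density_nonneg[of "periodic_set p0 B0"] density_le_one[of "periodic_set p0 B0"]
    by (cases "density (periodic_set p0 B0)") auto
  have "ereal r \<le> density D" if "dominating S D" for D
  proof (rule density_ge_of_window_count[OF card_window_ge[OF assms(1) r(2) _ that]])
    fix D i j assume D: "dominating S D" and ij: "i < j" "j - i \<le> ?M"
      and rep: "pattern D (2 * Max S) i = pattern D (2 * Max S) j"
    have "dominating S (periodization D i j)" by (rule dominating_periodization[OF assms(1) D ij(1) rep])
    then have "ereal r \<le> density (periodization D i j)"
      unfolding r(1)[symmetric] periodization_def using ij by (intro minimal) auto
    also have "\<dots> \<le> ereal (card (D \<inter> {i..<j}) / real_of_int (j - i))"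
      by (rule density_periodization_le[OF ij(1)])
    finally show "r * real_of_int (j - i) \<le> real (card (D \<inter> {i..<j}))" using ij by (simp add: field_simps)
  qed
  moreover have "p0 \<le> int (2 * Max S * 2 ^ (2 * Max S))"
  proof -
    have "1 \<le> Max S" using Max_in[OF assms(1,2)] assms(3) by (cases "Max S") auto
    then have "1 * 2 ^ (2 * Max S) \<le> 2 * Max S * 2 ^ (2 * Max S)" by (intro mult_le_mono1) simp
    then have "int (1 * 2 ^ (2 * Max S)) \<le> int (2 * Max S * 2 ^ (2 * Max S))" by (simp only: of_nat_le_iff)
    then show ?thesis using p0(2) by (simp only: mult_1 of_nat_mult of_nat_power of_nat_numeral)
  qed
  ultimately show ?thesis
    using p0 dom r(1) periodic_with_periodic_set[of p0 B0]
    by (intro exI[of _ "periodic_set p0 B0"] exI[of _ p0]) auto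
qed

end
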